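(* There is an absolute constant $K$ such that, for every $0<\epsilon<1$, over any sequence of soft sequence heap operations containing $N$ insertions, the sum over all sequences ever created (by insertion or by merging, after the possible application of $\mathrm{reduce}$) of their lengths at creation is at most $K\cdot N\lg\frac1\epsilon$ (for $\epsilon\le 1/2$; in general $O(N(1+\lg\frac1\epsilon))$).
   Context: Soft sequence heap with error parameter $0<\epsilon<1$ and $r_0=\lceil \lg(1/\epsilon)\rceil$ ($\lg$ = binary logarithm). The heap stores a list of nonempty sequences of items, each sorted increasingly by key and having a nonnegative integer rank. The operation $\mathrm{reduce}(L)$ on a sorted sequence $L=e_1,\dots,e_m$ removes $e_{2i}$ from $L$ for every $1\le i<m/2$, so the result has $\lceil (m+1)/2\rceil$ items. Each insertion creates one new sequence of rank $0$ containing the inserted item. A sequence of rank $r+1$ is created only by merging (sorted union) two existing sequences of rank $r$, which are thereby destroyed; if $r+1>r_0$ and $r+1-r_0$ is even, $\mathrm{reduce}$ is then applied to the result. Insertions and melds (which combine the sequence lists of two heaps) perform such merges while two sequences have equal rank; extract-min operations only remove items from sequences. *)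

theory Defs
  imports Complex_Main "HOL-Library.Multiset"
begin

text \<open>Abstract model of the soft sequence heap, tracking for every stored sequence
  only the heap it belongs to, its rank and its current length (number of items).
  A stored sequence is a triple (heap identifier, rank, length), length >= 1.
  A global state is (stored sequences, number of insertions so far,
  sum of the lengths at creation of all sequences created so far).\<close>

type_synonym ssh_state = "(nat \<times> nat \<times> nat) multiset \<times> nat \<times> nat"

definition ssh_r0 :: "real \<Rightarrow> nat" where
  "ssh_r0 eps = nat \<lceil>log 2 (1 / eps)\<rceil>"

text \<open>reduce applied to a sorted list: removes e_(2i) (1-based) for 1 <= i < m/2.\<close>
definition reduce :: "'a list \<Rightarrow> 'a list" where
  "reduce L = map (nth L) (filter (\<lambda>j. \<not> (odd j \<and> j + 1 < length L)) [0..<length L])"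

definition reduce_applies :: "nat \<Rightarrow> nat \<Rightarrow> bool" where
  "reduce_applies r0 k \<longleftrightarrow> k > r0 \<and> even (k - r0)"

text \<open>Length at creation of a rank-k sequence obtained by merging two sequences of
  total length m: m, or the length of reduce applied to a list of length m.\<close>
definition created_len :: "nat \<Rightarrow> nat \<Rightarrow> nat \<Rightarrow> nat" where
  "created_len r0 k m = (if reduce_applies r0 k then length (reduce [0..<m]) else m)"

inductive ssh_step :: "nat \<Rightarrow> ssh_state \<Rightarrow> ssh_state \<Rightarrow> bool" for r0 :: nat where
  insert: "ssh_step r0 (S, n, c) (S + {#(h, 0, 1)#}, Suc n, c + 1)"
|
  merge: "ssh_step r0 (S + {#(h, r, a), (h, r, b)#}, n, c)
            (S + {#(h, Suc r, created_len r0 (Suc r) (a + b))#}, n,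
             c + created_len r0 (Suc r) (a + b))"
|
  meld: "ssh_step r0 (S, n, c)
           (image_mset (\<lambda>(h, r, a). if h = j then (i, r, a) else (h, r, a)) S, n, c)"
| \<comment> \<open>extract-min: remove an item from a sequence; empty sequences are discarded\<close>
  remove: "ssh_step r0 (S + {#(h, r, Suc a)#}, n, c)
             (if a = 0 then S else S + {#(h, r, a)#}, n, c)"

definition ssh_reachable :: "nat \<Rightarrow> ssh_state \<Rightarrow> bool" where
  "ssh_reachable r0 st \<longleftrightarrow> (ssh_step r0)\<^sup>*\<^sup>* ({#}, 0, 0) st"

end

theory Submission
  imports Defs
begin

text \<open>A credit argument. Every insertion pays r0 + 7 credits. A sequence of rank r
  has length at most max_len r0 r, and building it by repeated merging from 2^r singletons
  creates sequences of total length build_cost r0 r. Below rank r0 the length doubles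
  with each rank; above r0 it only doubles every second rank, so
  build_cost r0 r \<le> (r0 + 7) 2^r. Hence a rank-r sequence can carry the surplus
  (r0 + 7) 2^r - build_cost r0 r of the credits paid for its 2^r insertions, and a merge
  of two rank-r sequences frees enough to pay for the length of the new one.\<close>

fun max_len :: "nat \<Rightarrow> nat \<Rightarrow> nat" where
  "max_len r0 0 = 1"
| "max_len r0 (Suc k) = (if reduce_applies r0 (Suc k) then max_len r0 k + 1 else 2 * max_len r0 k)"

fun build_cost :: "nat \<Rightarrow> nat \<Rightarrow> nat" where
  "build_cost r0 0 = 1"
| "build_cost r0 (Suc k) = 2 * build_cost r0 k + max_len r0 (Suc k)"

lemma length_filter_even_upt: "length (filter even [0..<m]) = (m + 1) div 2"
  by (induction m) auto

lemma length_reduce: "length (reduce L) = (if L = [] then 0 else (length L + 2) div 2)"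
proof (cases "length L")
  case 0
  then show ?thesis by (simp add: reduce_def)
next
  case (Suc m)
  have "filter (\<lambda>j. \<not> (odd j \<and> j + 1 < length L)) [0..<m] = filter even [0..<m]"
    by (rule filter_cong) (auto simp: Suc)
  then show ?thesis
    using Suc by (auto simp: reduce_def length_filter_even_upt)
qed

lemma created_len_le_max_len:
  assumes "a \<le> max_len r0 r" "b \<le> max_len r0 r"
  shows "created_len r0 (Suc r) (a + b) \<le> max_len r0 (Suc r)"
  using assms by (auto simp: created_len_def length_reduce)

lemma max_len_build_cost_upto_r0:
  "k \<le> r0 \<Longrightarrow> max_len r0 k = 2 ^ k \<and> build_cost r0 k = (k + 1) * 2 ^ k"
  by (induction k) (auto simp: reduce_applies_def)

lemma max_len_above_r0:
  "max_len r0 (r0 + 2 * j) + 1 \<le> 2 ^ (r0 + j + 1) \<and>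
   max_len r0 (r0 + 2 * j + 1) + 2 \<le> 2 ^ (r0 + j + 2)"
proof (induction j)
  case 0
  have "max_len r0 r0 = 2 ^ r0"
    using max_len_build_cost_upto_r0 by blast
  then show ?case by (simp add: reduce_applies_def)
next
  case (Suc j)
  have "max_len r0 (r0 + 2 * Suc j) = max_len r0 (r0 + 2 * j + 1) + 1"
    using Suc_eq_plus1 [of "r0 + 2 * j + 1"] by (simp add: reduce_applies_def)
  moreover have "max_len r0 (r0 + 2 * Suc j + 1) = 2 * max_len r0 (r0 + 2 * Suc j)"
    by (simp add: reduce_applies_def)
  ultimately show ?case
    using Suc.IH by simp
qed

lemma build_cost_above_r0:
  "build_cost r0 (r0 + 2 * j) + 6 * 2 ^ (r0 + j) \<le> (r0 + 7) * 2 ^ (r0 + 2 * j) \<and>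
   build_cost r0 (r0 + 2 * j + 1) + 8 * 2 ^ (r0 + j) \<le> (r0 + 7) * 2 ^ (r0 + 2 * j + 1)"
proof (induction j)
  case 0
  have "build_cost r0 r0 = (r0 + 1) * 2 ^ r0" "max_len r0 r0 = 2 ^ r0"
    using max_len_build_cost_upto_r0 by blast+
  then show ?case by (simp add: reduce_applies_def algebra_simps)
next
  case (Suc j)
  define P where "P = (2::nat) ^ (r0 + j)"
  define T where "T = (r0 + 7) * (2::nat) ^ (r0 + 2 * j + 1)"
  have len_even: "max_len r0 (r0 + 2 * Suc j) + 1 \<le> 4 * P"
    and len_odd: "max_len r0 (r0 + 2 * Suc j + 1) + 2 \<le> 8 * P"
    using max_len_above_r0 [of r0 "Suc j"] by (simp_all add: P_def power_add)
  have cost_even: "build_cost r0 (r0 + 2 * Suc j)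
      = 2 * build_cost r0 (r0 + 2 * j + 1) + max_len r0 (r0 + 2 * Suc j)"
    using Suc_eq_plus1 [of "r0 + 2 * j + 1"] by simp
  have cost_odd: "build_cost r0 (r0 + 2 * Suc j + 1)
      = 2 * build_cost r0 (r0 + 2 * Suc j) + max_len r0 (r0 + 2 * Suc j + 1)"
    by simp
  have IH: "build_cost r0 (r0 + 2 * j + 1) + 8 * P \<le> T"
    using Suc.IH by (simp add: P_def T_def)
  have even: "build_cost r0 (r0 + 2 * Suc j) + 12 * P \<le> 2 * T"
    using IH cost_even len_even by linarith
  have odd: "build_cost r0 (r0 + 2 * Suc j + 1) + 16 * P \<le> 4 * T"
    using even cost_odd len_odd by linarith
  have "(2::nat) ^ (r0 + Suc j) = 2 * P" "(2::nat) ^ (r0 + 2 * Suc j) * (r0 + 7) = 2 * T"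
    by (simp_all add: P_def T_def)
  then show ?case
    using even odd by (simp add: algebra_simps)
qed

lemma build_cost_le: "build_cost r0 k \<le> (r0 + 7) * 2 ^ k"
proof (cases "k \<le> r0")
  case True
  then have "(k + 1) * 2 ^ k \<le> (r0 + 7) * (2::nat) ^ k"
    by (intro mult_right_mono) auto
  then show ?thesis
    using max_len_build_cost_upto_r0 [OF True] by simp
next
  case False
  then obtain d where d: "k = r0 + d"
    using le_Suc_ex nat_le_linear by blast
  obtain j where "d = 2 * j \<or> d = 2 * j + 1"
    by (metis evenE oddE)
  then show ?thesis
    using build_cost_above_r0 [of r0 j] d by auto
qed

definition credit :: "nat \<Rightarrow> nat \<Rightarrow> int" where
  "credit r0 r = int ((r0 + 7) * 2 ^ r) - int (build_cost r0 r)"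

lemma credit_nonneg: "credit r0 r \<ge> 0"
  using build_cost_le [of r0 r] unfolding credit_def by linarith

lemma credit_Suc: "credit r0 (Suc r) + int (max_len r0 (Suc r)) = 2 * credit r0 r"
  by (simp add: credit_def)

lemma sum_credit_nonneg: "(\<Sum>x\<in>#S. credit r0 (fst (snd x))) \<ge> 0"
  by (induction S) (auto simp: credit_nonneg)

definition credit_invariant :: "nat \<Rightarrow> ssh_state \<Rightarrow> bool" where
  "credit_invariant r0 st = (case st of (S, n, c) \<Rightarrow>
     (\<forall>x\<in>#S. snd (snd x) \<le> max_len r0 (fst (snd x))) \<and>
     int c + (\<Sum>x\<in>#S. credit r0 (fst (snd x))) \<le> int ((r0 + 7) * n))"

lemma ssh_step_credit_invariant:
  "ssh_step r0 st st' \<Longrightarrow> credit_invariant r0 st \<Longrightarrow> credit_invariant r0 st'"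
proof (induction rule: ssh_step.induct)
  case (insert S n c h)
  have "credit r0 0 = int (r0 + 7) - 1" by (simp add: credit_def)
  then show ?case
    using insert by (auto simp: credit_invariant_def algebra_simps)
next
  case (merge S h r a b n c)
  have "a \<le> max_len r0 r" "b \<le> max_len r0 r"
    using merge by (auto simp: credit_invariant_def)
  then have "created_len r0 (Suc r) (a + b) \<le> max_len r0 (Suc r)"
    by (rule created_len_le_max_len)
  then show ?case
    using merge credit_Suc [of r0 r] by (auto simp: credit_invariant_def algebra_simps)
next
  case (meld S n c j i)
  let ?f = "\<lambda>(h, r, a). if h = j then (i, r, a) else (h, r, a)"
  have "image_mset (\<lambda>x. credit r0 (fst (snd x))) (image_mset ?f S)
      = image_mset (\<lambda>x. credit r0 (fst (snd x))) S"
    by (auto simp: multiset.map_comp intro: image_mset_cong)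
  then show ?case
    using meld by (auto simp: credit_invariant_def)
next
  case (remove S h r a n c)
  then show ?case
    using credit_nonneg [of r0 r] by (auto simp: credit_invariant_def)
qed

lemma ssh_reachable_created_len_sum_le:
  assumes "ssh_reachable r0 (S, N, c)"
  shows "c \<le> (r0 + 7) * N"
proof -
  have "(ssh_step r0)\<^sup>*\<^sup>* ({#}, 0, 0) (S, N, c)"
    using assms unfolding ssh_reachable_def .
  moreover have "credit_invariant r0 ({#}, 0, 0)"
    by (simp add: credit_invariant_def)
  ultimately have "credit_invariant r0 (S, N, c)"
    by (induction rule: rtranclp_induct) (auto intro: ssh_step_credit_invariant)
  then have "int c + (\<Sum>x\<in>#S. credit r0 (fst (snd x))) \<le> int ((r0 + 7) * N)"
    unfolding credit_invariant_def by (simp only: prod.case)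
  then have "int c \<le> int ((r0 + 7) * N)"
    using sum_credit_nonneg [of r0 S] by linarith
  then show ?thesis
    by (simp only: of_nat_le_iff)
qed

lemma ssh_r0_le:
  assumes "0 < eps" "eps < 1"
  shows "real (ssh_r0 eps) \<le> log 2 (1 / eps) + 1"
proof -
  have "log 2 (1 / eps) > 0"
    using assms by simp
  then show ?thesis
    unfolding ssh_r0_def by (simp add: of_nat_nat)
qed

theorem lemma4:
  "\<exists>K::real. \<forall>eps::real. \<forall>S N c.
     0 < eps \<and> eps < 1 \<and> ssh_reachable (ssh_r0 eps) (S, N, c) \<longrightarrow>
       (eps \<le> 1/2 \<longrightarrow> real c \<le> K * real N * log 2 (1 / eps)) \<and>
       real c \<le> K * real N * (1 + log 2 (1 / eps))"
proof (intro exI [of _ 9] allI impI conjI; elim conjE)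
  fix eps :: real and S N c
  assume eps: "0 < eps" "eps < 1" and reach: "ssh_reachable (ssh_r0 eps) (S, N, c)"
  let ?L = "log 2 (1 / eps)"
  have "real c \<le> (real (ssh_r0 eps) + 7) * real N"
    using ssh_reachable_created_len_sum_le [OF reach]
    by (metis of_nat_le_iff of_nat_add of_nat_mult of_nat_numeral)
  also have "\<dots> \<le> (?L + 8) * real N"
    using ssh_r0_le [OF eps] by (intro mult_right_mono) auto
  finally have c: "real c \<le> (?L + 8) * real N" .
  have "(?L + 8) * real N \<le> 9 * (1 + ?L) * real N"
    using eps by (intro mult_right_mono) auto
  with c show "real c \<le> 9 * real N * (1 + ?L)"
    by (simp add: mult_ac)
  assume "eps \<le> 1/2"
  then have "(?L + 8) * real N \<le> (9 * ?L) * real N"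
    using eps by (intro mult_right_mono) (auto simp: le_log_iff field_simps)
  with c show "real c \<le> 9 * real N * ?L"
    by (simp add: mult_ac)
qed

end
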